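(* Let $e_1,\dots,e_N\in C(\mathbb C/\Gamma;\mathbb C^2)$ be orthonormal in $L^2(\mathbb C/\Gamma;\mathbb C^2)$, and for $k=1,2$ let $\vec e_k(x)=(e_1^k(x),\dots,e_N^k(x))^T\in\mathbb C^N$. For $j\in\{1,2\}^N$ and $a=(a_1,\dots,a_N)\in(\mathbb C/\Gamma)^N$ let $E(j,a)$ be the $N\times N$ matrix with columns $\vec e_{j_1}(a_1),\dots,\vec e_{j_N}(a_N)$. Then there exist $j\in\{1,2\}^N$ and $a\in(\mathbb C/\Gamma)^N$ with $$|\det E(j,a)|\ \ge\ \frac{\sqrt{N!}}{2^{N/2}|\mathbb C/\Gamma|^{N/2}}.$$
   Context: $\Gamma=4\pi(i\omega\mathbb Z\oplus i\omega^2\mathbb Z)\subset\mathbb C$ with $\omega=e^{2\pi i/3}$; $\mathbb C/\Gamma$ is the flat torus with Lebesgue measure and area $|\mathbb C/\Gamma|$. Write $e_j=(e_j^1,e_j^2)$; the $L^2$ inner product is $(\psi|\phi)=\int_{\mathbb C/\Gamma}(\psi^1\bar\phi^1+\psi^2\bar\phi^2)\,dx$. *)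

theory Defs
  imports "HOL-Analysis.Analysis" "Jordan_Normal_Form.Determinant"
begin

definition omega :: complex where "omega = cis (2 * pi / 3)"

text \<open>Generators of the lattice Gamma = 4 pi (i omega Z + i omega^2 Z).\<close>
definition gv1 :: complex where "gv1 = 4 * pi * \<i> * omega"
definition gv2 :: complex where "gv2 = 4 * pi * \<i> * omega ^ 2"

text \<open>Closed fundamental parallelogram of Gamma (boundary is a null set).\<close>
definition fund_dom :: "complex set" where
  "fund_dom = {complex_of_real s * gv1 + complex_of_real t * gv2 | s t. s \<in> {0..1} \<and> t \<in> {0..1}}"

definition torus_area :: real where "torus_area = measure lborel fund_dom"

text \<open>Gamma-periodic functions on C = functions on the torus C/Gamma.\<close>
definition gamma_periodic :: "(complex \<Rightarrow> 'a) \<Rightarrow> bool" where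
  "gamma_periodic f \<longleftrightarrow> (\<forall>z. f (z + gv1) = f z \<and> f (z + gv2) = f z)"

definition L2ip :: "(complex \<Rightarrow> complex \<times> complex) \<Rightarrow> (complex \<Rightarrow> complex \<times> complex) \<Rightarrow> complex" where
  "L2ip \<psi> \<phi> = integral fund_dom (\<lambda>x. fst (\<psi> x) * cnj (fst (\<phi> x)) + snd (\<psi> x) * cnj (snd (\<phi> x)))"

definition comp2 :: "nat \<Rightarrow> complex \<times> complex \<Rightarrow> complex" where
  "comp2 k v = (if k = 1 then fst v else snd v)"

definition Emat :: "nat \<Rightarrow> (nat \<Rightarrow> complex \<Rightarrow> complex \<times> complex) \<Rightarrow> (nat \<Rightarrow> nat) \<Rightarrow> (nat \<Rightarrow> complex) \<Rightarrow> complex mat" where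
  "Emat N e j a = Matrix.mat N N (\<lambda>(r, c). comp2 (j c) (e r (a c)))"

end

theory Submission
  imports Defs
begin

text \<open>
  Let \<open>G\<^sub>n\<close> be the Gram matrix of the first \<open>n\<close> columns of \<open>E(j,a)\<close>. By the Schur complement,
  adding a column \<open>w\<close> multiplies the determinant of \<open>G\<^sub>n\<close> by the squared distance of \<open>w\<close> to
  the span of the previous columns, a Hermitian form \<open>w\<^sup>* K w\<close> with \<open>K = det G\<^sub>n (I - P)\<close>.
  Taking for \<open>w\<close> the column \<open>(e\<^sub>1\<^sup>k(x), \<dots>, e\<^sub>N\<^sup>k(x))\<close>, orthonormality of the \<open>e\<^sub>i\<close> shows that the integral over the torus of
  this form, summed over \<open>k = 1, 2\<close>, is \<open>tr K = (N - n) det G\<^sub>n\<close>. Hence for a suitable choice of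
  \<open>k\<close> and \<open>x\<close> the determinant grows by a factor \<open>(N - n) / (2 |\<complex>/\<Gamma>|)\<close>. After \<open>N\<close> steps
  \<open>|det E(j,a)|\<^sup>2 = det G\<^sub>N \<ge> N! / (2 |\<complex>/\<Gamma>|)\<^sup>N\<close>.
\<close>

lemma det_bordered_mat:
  fixes f :: "nat \<Rightarrow> nat \<Rightarrow> 'a :: idom" and n :: nat
  defines "G \<equiv> Matrix.mat n n (\<lambda>(i, j). f i j)"
  assumes nz: "Determinant.det G \<noteq> 0"
  shows "Determinant.det (Matrix.mat (Suc n) (Suc n) (\<lambda>(i, j). f i j)) =
     f n n * Determinant.det G - (\<Sum>i<n. \<Sum>j<n. f n i * adj_mat G $$ (i, j) * f j n)"
proof -
  define B where "B = Matrix.mat n 1 (\<lambda>(i, _). f i n)"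
  define C where "C = Matrix.mat 1 n (\<lambda>(_, j). f n j)"
  define D where "D = Matrix.mat 1 1 (\<lambda>_. f n n)"
  have G: "G \<in> carrier_mat n n" and B: "B \<in> carrier_mat n 1" and C: "C \<in> carrier_mat 1 n"
    and D: "D \<in> carrier_mat 1 1" by (auto simp: G_def B_def C_def D_def)
  have adjG: "adj_mat G \<in> carrier_mat n n" using adj_mat[OF G] by auto
  define X where "X = adj_mat G * B"
  define E where "E = Determinant.det G \<cdot>\<^sub>m 1\<^sub>m 1"
  have X: "X \<in> carrier_mat n 1" and E: "E \<in> carrier_mat 1 1"
    using adjG B by (auto simp: X_def E_def)
  have big: "Matrix.mat (Suc n) (Suc n) (\<lambda>(i, j). f i j) = four_block_mat G B C D"
    by (rule eq_matI) (auto simp: G_def B_def C_def D_def less_Suc_eq)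
  text \<open>Right multiplication by \<open>R\<close> clears the upper right block, since \<open>G adj G = det G \<cdot> I\<close>.\<close>
  define R where "R = four_block_mat (1\<^sub>m n) (-X) (0\<^sub>m 1 n) E"
  have Rc: "R \<in> carrier_mat (n + 1) (n + 1)" using E by (auto simp: R_def)
  have detR: "Determinant.det R = Determinant.det G"
    unfolding R_def
    by (subst det_four_block_mat_lower_left_zero[of _ n _ 1]) (use X E in \<open>auto simp: E_def\<close>)
  have GX: "G * X = Determinant.det G \<cdot>\<^sub>m B"
  proof -
    have "G * X = (G * adj_mat G) * B" unfolding X_def using G adjG B by (simp add: assoc_mult_mat)
    also have "\<dots> = Determinant.det G \<cdot>\<^sub>m B"
      using adj_mat[OF G] B by (simp add: mult_smult_assoc_mat[of _ n n])
    finally show ?thesis .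
  qed
  have upper_right: "G * (-X) + B * E = 0\<^sub>m n 1"
    using GX G X B by (auto simp: E_def)
  define L where "L = C * (-X) + D * E"
  have L: "L \<in> carrier_mat 1 1" using C X D E by (auto simp: L_def)
  have "four_block_mat G B C D * R = four_block_mat G (0\<^sub>m n 1) C L"
    unfolding R_def L_def upper_right[symmetric]
    by (subst mult_four_block_mat[OF G B C D]) (use X E G B C D in auto)
  moreover have "four_block_mat G B C D \<in> carrier_mat (n + 1) (n + 1)" using G D by auto
  ultimately have "Determinant.det (four_block_mat G B C D) * Determinant.det G =
     Determinant.det G * Determinant.det L"
    using det_mult[OF _ Rc] detR det_four_block_mat_upper_right_zero[OF G refl C L] by metis
  then have "Determinant.det (four_block_mat G B C D) = L $$ (0, 0)"
    using nz det_single[OF L] by simp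
  also have "L $$ (0, 0) = f n n * Determinant.det G - (\<Sum>i<n. \<Sum>j<n. f n i * adj_mat G $$ (i, j) * f j n)"
  proof -
    have Xi: "X $$ (i, 0) = (\<Sum>j<n. adj_mat G $$ (i, j) * f j n)" if "i < n" for i
      using that adjG B unfolding X_def
      by (auto simp: scalar_prod_def B_def lessThan_atLeast0 intro!: sum.cong)
    have "(C * (-X)) $$ (0, 0) = - (\<Sum>i<n. f n i * X $$ (i, 0))"
      using C X by (simp add: scalar_prod_def C_def lessThan_atLeast0 sum_negf)
    also have "\<dots> = - (\<Sum>i<n. \<Sum>j<n. f n i * adj_mat G $$ (i, j) * f j n)"
      by (simp add: Xi sum_distrib_left mult.assoc)
    finally show ?thesis
      unfolding L_def using C X D E by (simp add: scalar_prod_def D_def E_def)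
  qed
  finally show ?thesis using big by simp
qed

text \<open>\<open>u c r\<close> is the \<open>r\<close>-th coordinate of the \<open>c\<close>-th vector, \<open>r < M\<close>.\<close>

definition gram_mat :: "nat \<Rightarrow> nat \<Rightarrow> (nat \<Rightarrow> nat \<Rightarrow> complex) \<Rightarrow> complex mat" where
  "gram_mat M n u = Matrix.mat n n (\<lambda>(c, c'). \<Sum>r<M. cnj (u c r) * u c' r)"

text \<open>\<open>det G\<close> times the orthogonal projection onto the complement of the span of \<open>u 0, \<dots>, u (n - 1)\<close>.\<close>

definition gram_compl_form :: "nat \<Rightarrow> nat \<Rightarrow> (nat \<Rightarrow> nat \<Rightarrow> complex) \<Rightarrow> nat \<Rightarrow> nat \<Rightarrow> complex" where
  "gram_compl_form M n u r s =
     (if r = s then Determinant.det (gram_mat M n u) else 0) -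
     (\<Sum>i<n. \<Sum>i'<n. u i r * adj_mat (gram_mat M n u) $$ (i, i') * cnj (u i' s))"

lemma gram_mat_carrier: "gram_mat M n u \<in> carrier_mat n n"
  by (simp add: gram_mat_def)

lemma det_gram_mat_extend:
  assumes nz: "Determinant.det (gram_mat M n u) \<noteq> 0"
  shows "Determinant.det (gram_mat M (Suc n) (u(n := w))) =
           (\<Sum>r<M. \<Sum>s<M. cnj (w r) * w s * gram_compl_form M n u r s)"
proof -
  define G where "G = gram_mat M n u"
  define A where "A = (\<lambda>i i'. adj_mat G $$ (i, i'))"
  define f where "f = (\<lambda>c c'. \<Sum>r<M. cnj ((u(n := w)) c r) * (u(n := w)) c' r)"
  have "Matrix.mat n n (\<lambda>(c, c'). f c c') = G"
    by (rule eq_matI) (auto simp: G_def gram_mat_def f_def)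
  then have "Determinant.det (gram_mat M (Suc n) (u(n := w))) =
      f n n * Determinant.det G - (\<Sum>i<n. \<Sum>i'<n. f n i * A i i' * f i' n)"
    using det_bordered_mat[where f = f and n = n] nz by (simp add: gram_mat_def f_def G_def A_def)
  also have "\<dots> = (\<Sum>r<M. cnj (w r) * w r) * Determinant.det G -
      (\<Sum>i<n. \<Sum>i'<n. (\<Sum>r<M. cnj (w r) * u i r) * A i i' * (\<Sum>s<M. cnj (u i' s) * w s))"
    by (simp add: f_def)
  also have "(\<Sum>i<n. \<Sum>i'<n. (\<Sum>r<M. cnj (w r) * u i r) * A i i' * (\<Sum>s<M. cnj (u i' s) * w s)) =
      (\<Sum>r<M. \<Sum>s<M. cnj (w r) * w s * (\<Sum>i<n. \<Sum>i'<n. u i r * A i i' * cnj (u i' s)))"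
  proof -
    have "(\<Sum>i<n. \<Sum>i'<n. (\<Sum>r<M. cnj (w r) * u i r) * A i i' * (\<Sum>s<M. cnj (u i' s) * w s)) =
        (\<Sum>i<n. \<Sum>i'<n. \<Sum>r<M. \<Sum>s<M. cnj (w r) * w s * (u i r * A i i' * cnj (u i' s)))"
      by (simp add: sum_distrib_left sum_distrib_right mult_ac)
    also have "\<dots> = (\<Sum>r<M. \<Sum>s<M. \<Sum>i<n. \<Sum>i'<n. cnj (w r) * w s * (u i r * A i i' * cnj (u i' s)))"
      by (subst (2) sum.swap, subst sum.swap, subst (2) sum.swap, subst (3) sum.swap) simp
    finally show ?thesis by (simp add: sum_distrib_left)
  qed
  also have "(\<Sum>r<M. cnj (w r) * w r) * Determinant.det G =
      (\<Sum>r<M. \<Sum>s<M. cnj (w r) * w s * (if r = s then Determinant.det G else 0))"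
    by (simp add: sum_distrib_right if_distrib sum.delta cong: if_cong)
  finally show ?thesis
    by (simp only: gram_compl_form_def G_def A_def right_diff_distrib sum_subtractf)
qed

lemma sum_diag_gram_compl_form:
  "(\<Sum>r<M. gram_compl_form M n u r r) = (of_nat M - of_nat n) * Determinant.det (gram_mat M n u)"
proof -
  define G where "G = gram_mat M n u"
  have G: "G \<in> carrier_mat n n" by (simp add: G_def gram_mat_carrier)
  have "(\<Sum>r<M. \<Sum>i<n. \<Sum>i'<n. u i r * adj_mat G $$ (i, i') * cnj (u i' r)) =
      (\<Sum>i<n. \<Sum>i'<n. adj_mat G $$ (i, i') * G $$ (i', i))"
  proof -
    have "(\<Sum>r<M. \<Sum>i<n. \<Sum>i'<n. u i r * adj_mat G $$ (i, i') * cnj (u i' r)) =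
        (\<Sum>i<n. \<Sum>i'<n. \<Sum>r<M. u i r * adj_mat G $$ (i, i') * cnj (u i' r))"
      by (subst sum.swap) (simp add: sum.swap[of _ "{..<n}" "{..<M}"])
    also have "\<dots> = (\<Sum>i<n. \<Sum>i'<n. adj_mat G $$ (i, i') * G $$ (i', i))"
      by (auto simp: G_def gram_mat_def sum_distrib_left sum_distrib_right mult_ac intro!: sum.cong)
    finally show ?thesis .
  qed
  also have "\<dots> = (\<Sum>i<n. (adj_mat G * G) $$ (i, i))"
    using adj_mat(1)[OF G] G by (auto simp: scalar_prod_def lessThan_atLeast0 intro!: sum.cong)
  also have "\<dots> = of_nat n * Determinant.det G"
    using adj_mat(3)[OF G] by simp
  finally show ?thesis
    by (simp add: gram_compl_form_def G_def sum_subtractf algebra_simps)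
qed

lemma continuous_on_compact_integrable:
  fixes f :: "'a :: euclidean_space \<Rightarrow> 'b :: euclidean_space"
  assumes "compact S" "continuous_on S f"
  shows "f integrable_on S"
proof -
  have I: "integrable lborel (\<lambda>x. indicator S x *\<^sub>R f x)"
    by (rule borel_integrable_compact[OF assms])
  have "set_integrable lebesgue S f"
    unfolding set_integrable_def
    using integrable_completion[OF borel_measurable_integrable[OF I]] I by simp
  then show ?thesis by (rule set_lebesgue_integral_eq_integral)
qed

lemma exists_integral_le_measure_mult:
  fixes f :: "'a :: euclidean_space \<Rightarrow> real"
  assumes S: "compact S" "S \<noteq> {}" and f: "continuous_on S f"
  shows "\<exists>x\<in>S. integral S f \<le> measure lebesgue S * f x"
proof -
  obtain x where x: "x \<in> S" "\<And>y. y \<in> S \<Longrightarrow> f y \<le> f x"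
    using continuous_attains_sup[OF S f] by auto
  have "integral S f \<le> integral S (\<lambda>_. f x)"
    using x(2) continuous_on_compact_integrable[OF S(1) f]
      integrable_on_const[OF lmeasurable_compact[OF S(1)]]
    by (intro integral_le) auto
  also have "\<dots> = measure lebesgue S * f x"
    using integral_mult_left[of S "\<lambda>_. 1" "f x"] lmeasure_integral[OF lmeasurable_compact[OF S(1)]]
    by simp
  finally show ?thesis using x(1) by blast
qed

lemma fund_dom_image:
  "fund_dom = (\<lambda>p. complex_of_real (fst p) * gv1 + complex_of_real (snd p) * gv2) ` ({0..1} \<times> {0..1})"
  unfolding fund_dom_def by (auto simp: image_def; fastforce)

lemma compact_fund_dom: "compact fund_dom"
  unfolding fund_dom_image
  by (intro compact_continuous_image compact_Times compact_Icc continuous_intros)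

lemma fund_dom_nonempty: "fund_dom \<noteq> {}"
  unfolding fund_dom_image by auto

lemma torus_area_eq_lebesgue: "torus_area = measure lebesgue fund_dom"
  unfolding torus_area_def
  by (rule measure_completion[symmetric]) (simp add: borel_closed compact_imp_closed compact_fund_dom)

lemma continuous_on_comp2: "continuous_on S g \<Longrightarrow> continuous_on S (\<lambda>x. comp2 k (g x))"
  unfolding comp2_def by (cases "k = 1") (auto intro: continuous_intros)

lemma sum_integral_comp2_orthonormal:
  assumes cont: "\<And>i. i < M \<Longrightarrow> continuous_on UNIV (e i)"
    and orth: "\<And>i i'. i < M \<Longrightarrow> i' < M \<Longrightarrow> L2ip (e i) (e i') = (if i = i' then 1 else 0)"
    and rs: "r < M" "s < M"
  shows "(\<Sum>k\<in>{1, 2}. integral fund_dom (\<lambda>x. cnj (comp2 k (e r x)) * comp2 k (e s x))) =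
           (if r = s then 1 else 0)"
proof -
  have int: "(\<lambda>x. cnj (comp2 k (e r x)) * comp2 k (e s x)) integrable_on fund_dom" for k
    by (intro continuous_on_compact_integrable compact_fund_dom continuous_intros
        continuous_on_comp2 continuous_on_subset[OF cont] rs) auto
  have "(\<Sum>k\<in>{1, 2}. integral fund_dom (\<lambda>x. cnj (comp2 k (e r x)) * comp2 k (e s x))) = L2ip (e s) (e r)"
    unfolding L2ip_def using integral_add[OF int[of 1] int[of 2]]
    by (simp add: comp2_def mult.commute)
  then show ?thesis using orth[OF rs(2,1)] by auto
qed

definition quad_form_at ::
    "(nat \<Rightarrow> complex \<Rightarrow> complex \<times> complex) \<Rightarrow> nat \<Rightarrow> (nat \<Rightarrow> nat \<Rightarrow> complex) \<Rightarrow> nat \<Rightarrow> complex \<Rightarrow> complex" where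
  "quad_form_at e M K k x = (\<Sum>r<M. \<Sum>s<M. cnj (comp2 k (e r x)) * comp2 k (e s x) * K r s)"

lemma continuous_on_quad_form_at:
  assumes cont: "\<And>i. i < M \<Longrightarrow> continuous_on UNIV (e i)"
  shows "continuous_on S (quad_form_at e M K k)"
  unfolding quad_form_at_def
  by (intro continuous_intros continuous_on_comp2 continuous_on_subset[OF cont]) auto

lemma sum_integral_quad_form_at:
  assumes cont: "\<And>i. i < M \<Longrightarrow> continuous_on UNIV (e i)"
    and orth: "\<And>i i'. i < M \<Longrightarrow> i' < M \<Longrightarrow> L2ip (e i) (e i') = (if i = i' then 1 else 0)"
  shows "integral fund_dom (quad_form_at e M K 1) + integral fund_dom (quad_form_at e M K 2) = (\<Sum>r<M. K r r)"
proof -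
  have int_entry: "(\<lambda>x. cnj (comp2 k (e r x)) * comp2 k (e s x)) integrable_on fund_dom"
    if "r < M" "s < M" for k r s
    using that by (intro continuous_on_compact_integrable compact_fund_dom continuous_intros
        continuous_on_comp2 continuous_on_subset[OF cont]) auto
  have integral_entries: "integral fund_dom (quad_form_at e M K k) =
      (\<Sum>r<M. \<Sum>s<M. integral fund_dom (\<lambda>x. cnj (comp2 k (e r x)) * comp2 k (e s x)) * K r s)" for k
    unfolding quad_form_at_def
    by (subst integral_sum, auto intro!: integrable_sum integrable_on_mult_left int_entry sum.cong,
        subst integral_sum, auto intro!: integrable_on_mult_left int_entry simp: integral_mult_left)
  have "integral fund_dom (quad_form_at e M K 1) + integral fund_dom (quad_form_at e M K 2) =
      (\<Sum>r<M. \<Sum>s<M. (\<Sum>k\<in>{1, 2}. integral fund_dom (\<lambda>x. cnj (comp2 k (e r x)) * comp2 k (e s x))) * K r s)"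
    unfolding integral_entries by (simp add: sum.distrib distrib_right)
  also have "\<dots> = (\<Sum>r<M. \<Sum>s<M. (if r = s then K r s else 0))"
    using sum_integral_comp2_orthonormal[of M e, OF cont orth] by (intro sum.cong) auto
  finally show ?thesis by simp
qed

lemma exists_point_quad_form_at_ge_trace:
  assumes cont: "\<And>i. i < M \<Longrightarrow> continuous_on UNIV (e i)"
    and orth: "\<And>i i'. i < M \<Longrightarrow> i' < M \<Longrightarrow> L2ip (e i) (e i') = (if i = i' then 1 else 0)"
  shows "\<exists>k\<in>{1, 2}. \<exists>x. Re (\<Sum>r<M. K r r) \<le> 2 * torus_area * Re (quad_form_at e M K k x)"
proof -
  define \<Phi> where "\<Phi> = quad_form_at e M K"
  have cont_\<Phi>: "continuous_on fund_dom (\<Phi> k)" for k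
    unfolding \<Phi>_def by (rule continuous_on_quad_form_at[OF cont])
  have int_Re_\<Phi>: "(\<lambda>x. Re (\<Phi> k x)) integrable_on fund_dom" for k
    using cont_\<Phi> by (intro continuous_on_compact_integrable compact_fund_dom continuous_intros)
  have Re_integral_\<Phi>: "Re (integral fund_dom (\<Phi> k)) = integral fund_dom (\<lambda>x. Re (\<Phi> k x))" for k
    using integral_linear[OF continuous_on_compact_integrable[OF compact_fund_dom cont_\<Phi>] bounded_linear_Re]
    by (simp add: o_def)
  have "continuous_on fund_dom (\<lambda>x. Re (\<Phi> 1 x) + Re (\<Phi> 2 x))"
    using cont_\<Phi> by (intro continuous_intros)
  then obtain x where x: "integral fund_dom (\<lambda>x. Re (\<Phi> 1 x) + Re (\<Phi> 2 x)) \<le>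
      torus_area * (Re (\<Phi> 1 x) + Re (\<Phi> 2 x))"
    using exists_integral_le_measure_mult[OF compact_fund_dom fund_dom_nonempty]
    by (auto simp: torus_area_eq_lebesgue)
  have "Re (\<Sum>r<M. K r r) = Re (integral fund_dom (\<Phi> 1) + integral fund_dom (\<Phi> 2))"
    by (simp only: \<Phi>_def sum_integral_quad_form_at[where M = M and e = e and K = K, OF cont orth])
  also have "\<dots> = integral fund_dom (\<lambda>x. Re (\<Phi> 1 x)) + integral fund_dom (\<lambda>x. Re (\<Phi> 2 x))"
    unfolding plus_complex.sel Re_integral_\<Phi> ..
  also have "\<dots> = integral fund_dom (\<lambda>x. Re (\<Phi> 1 x) + Re (\<Phi> 2 x))"
    by (rule integral_add[symmetric]) (rule int_Re_\<Phi>)+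
  finally have bound: "Re (\<Sum>r<M. K r r) \<le> torus_area * (Re (\<Phi> 1 x) + Re (\<Phi> 2 x))"
    using x by simp
  have area: "torus_area \<ge> 0"
    by (simp add: torus_area_def)
  show ?thesis
  proof (cases "Re (\<Phi> 2 x) \<le> Re (\<Phi> 1 x)")
    case True
    then have "torus_area * Re (\<Phi> 2 x) \<le> torus_area * Re (\<Phi> 1 x)"
      using area by (rule mult_left_mono)
    then show ?thesis
      using bound by (intro bexI[of _ 1] exI[of _ x]) (auto simp: \<Phi>_def algebra_simps)
  next
    case False
    then have "torus_area * Re (\<Phi> 1 x) \<le> torus_area * Re (\<Phi> 2 x)"
      using area by (intro mult_left_mono) auto
    then show ?thesis
      using bound by (intro bexI[of _ 2] exI[of _ x]) (auto simp: \<Phi>_def algebra_simps)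
  qed
qed

definition Emat_column :: "(nat \<Rightarrow> complex \<Rightarrow> complex \<times> complex) \<Rightarrow> (nat \<Rightarrow> nat) \<Rightarrow> (nat \<Rightarrow> complex) \<Rightarrow>
    nat \<Rightarrow> nat \<Rightarrow> complex" where
  "Emat_column e j a c r = comp2 (j c) (e r (a c))"

lemma Emat_column_upd:
  "Emat_column e (j(n := k)) (a(n := x)) = (Emat_column e j a)(n := (\<lambda>r. comp2 k (e r x)))"
  by (auto simp: Emat_column_def fun_eq_iff)

lemma exists_det_gram_mat_ge:
  fixes e :: "nat \<Rightarrow> complex \<Rightarrow> complex \<times> complex"
  assumes cont: "\<And>i. i < M \<Longrightarrow> continuous_on UNIV (e i)"
    and orth: "\<And>i i'. i < M \<Longrightarrow> i' < M \<Longrightarrow> L2ip (e i) (e i') = (if i = i' then 1 else 0)"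
    and area: "torus_area > 0"
  shows "n \<le> M \<Longrightarrow> \<exists>j a. (\<forall>c<n. j c \<in> {1, 2}) \<and>
           (\<Prod>i<n. real (M - i)) / (2 * torus_area) ^ n \<le> Re (Determinant.det (gram_mat M n (Emat_column e j a)))"
proof (induction n)
  case 0
  have "gram_mat M 0 u = 1\<^sub>m 0" for u
    by (rule eq_matI) (auto simp: gram_mat_def)
  then show ?case by simp
next
  case (Suc n)
  then obtain j a where j: "\<forall>c<n. j c \<in> {1, 2}"
    and IH: "(\<Prod>i<n. real (M - i)) / (2 * torus_area) ^ n \<le> Re (Determinant.det (gram_mat M n (Emat_column e j a)))"
    by auto
  define u where "u = Emat_column e j a"
  define dG where "dG = Determinant.det (gram_mat M n u)"
  have "0 < (\<Prod>i<n. real (M - i)) / (2 * torus_area) ^ n"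
    using Suc.prems area by (auto intro!: prod_pos divide_pos_pos)
  then have "dG \<noteq> 0" using IH by (auto simp: dG_def u_def)
  obtain k x where k: "k \<in> {1, 2}"
    and x: "Re (\<Sum>r<M. gram_compl_form M n u r r) \<le> 2 * torus_area * Re (quad_form_at e M (gram_compl_form M n u) k x)"
    using exists_point_quad_form_at_ge_trace[OF cont orth] by blast
  have "(\<Prod>i<Suc n. real (M - i)) / (2 * torus_area) ^ Suc n =
      (real M - real n) * ((\<Prod>i<n. real (M - i)) / (2 * torus_area) ^ n) / (2 * torus_area)"
    using Suc.prems by (simp add: of_nat_diff mult_ac)
  also have "\<dots> \<le> (real M - real n) * Re dG / (2 * torus_area)"
    using IH Suc.prems area by (intro divide_right_mono mult_left_mono) (auto simp: dG_def u_def)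
  also have "\<dots> \<le> Re (Determinant.det (gram_mat M (Suc n) (Emat_column e (j(n := k)) (a(n := x)))))"
    using x area \<open>dG \<noteq> 0\<close>
    by (simp add: Emat_column_upd det_gram_mat_extend sum_diag_gram_compl_form quad_form_at_def
        divide_le_eq mult.commute dG_def u_def)
  finally have bound: "(\<Prod>i<Suc n. real (M - i)) / (2 * torus_area) ^ Suc n \<le>
      Re (Determinant.det (gram_mat M (Suc n) (Emat_column e (j(n := k)) (a(n := x)))))" .
  have "\<forall>c<Suc n. (j(n := k)) c \<in> {1, 2}"
    using j k by (auto simp: less_Suc_eq)
  with bound show ?case by (intro exI conjI)
qed

lemma det_map_mat_cnj: "Determinant.det (map_mat cnj A) = cnj (Determinant.det A)"
  unfolding Determinant.det_def by (simp add: cnj_sum cnj_prod)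

lemma det_gram_mat_Emat_column:
  "Determinant.det (gram_mat N N (Emat_column e j a)) = complex_of_real (cmod (Determinant.det (Emat N e j a)) ^ 2)"
proof -
  define E where "E = Emat N e j a"
  have E: "E \<in> carrier_mat N N" by (simp add: E_def Emat_def)
  have "gram_mat N N (Emat_column e j a) = map_mat cnj (transpose_mat E) * E"
    by (rule eq_matI)
       (use E in \<open>auto simp: gram_mat_def Emat_column_def E_def Emat_def scalar_prod_def lessThan_atLeast0
         intro!: sum.cong\<close>)
  then have "Determinant.det (gram_mat N N (Emat_column e j a)) =
      Determinant.det (map_mat cnj (transpose_mat E)) * Determinant.det E"
    using det_mult[OF _ E] E by simp
  also have "Determinant.det (map_mat cnj (transpose_mat E)) = cnj (Determinant.det E)"
    using det_map_mat_cnj det_transpose[OF E] by simp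
  finally show ?thesis unfolding complex_norm_square by (simp add: E_def mult.commute)
qed

theorem mainTheorem9:
  fixes N :: nat and e :: "nat \<Rightarrow> complex \<Rightarrow> complex \<times> complex"
  assumes cont: "\<And>i. i < N \<Longrightarrow> continuous_on UNIV (e i)"
    and per: "\<And>i. i < N \<Longrightarrow> gamma_periodic (e i)"
    and orth: "\<And>i i'. i < N \<Longrightarrow> i' < N \<Longrightarrow> L2ip (e i) (e i') = (if i = i' then 1 else 0)"
  shows "\<exists>j a. (\<forall>c<N. j c \<in> {1, 2}) \<and>
           cmod (Determinant.det (Emat N e j a)) \<ge>
             sqrt (fact N) / (2 powr (real N / 2) * torus_area powr (real N / 2))"
proof (cases "torus_area > 0")
  case False
  then have "torus_area = 0"
    using measure_nonneg[of lborel fund_dom] unfolding torus_area_def by linarith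
  then show ?thesis by (intro exI[of _ "\<lambda>_. 1"] exI[of _ "\<lambda>_. 0"]) simp
next
  case area: True
  obtain j a where j: "\<forall>c<N. j c \<in> {1, 2}"
    and bound: "(\<Prod>i<N. real (N - i)) / (2 * torus_area) ^ N \<le> cmod (Determinant.det (Emat N e j a)) ^ 2"
    using exists_det_gram_mat_ge[of N e, OF cont orth area le_refl] by (auto simp: det_gram_mat_Emat_column)
  have "2 powr (real N / 2) * torus_area powr (real N / 2) = sqrt ((2 * torus_area) ^ N)"
    using area by (simp add: powr_half_sqrt_powr powr_realpow real_sqrt_mult power_mult_distrib)
  then have "sqrt (fact N) / (2 powr (real N / 2) * torus_area powr (real N / 2)) =
      sqrt ((\<Prod>i<N. real (N - i)) / (2 * torus_area) ^ N)"
    by (simp add: real_sqrt_divide fact_prod_rev lessThan_atLeast0 of_nat_prod)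
  also have "\<dots> \<le> cmod (Determinant.det (Emat N e j a))"
    using bound real_le_lsqrt by (simp add: real_sqrt_le_iff)
  finally show ?thesis using j by blast
qed

end
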